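(* Let $s,t$ be real numbers with $t\ge s>0$. For every positive integer $n$, $M_n \geq t\, M_{n-1}$.
   Context: For a real number $s$, a positive integer $n$ and a set $P \subseteq \mathbb{R}$, $\mathcal{G}_s^{n\times n}(P)$ denotes the set of all $n\times n$ real upper Hessenberg matrices $A=(a_{ij})$ with $a_{i+1,i} = s$ for $1\le i\le n-1$, $a_{ij}=0$ for $i > j+1$, and $a_{ij}\in P$ for all $i \le j$. For $n\ge 1$, $M_n$ is the maximum of $|\det A|$ over $A\in\mathcal{G}_s^{n\times n}([0,t])$, and $M_0 := 1$. *)

theory Defs
  imports "Jordan_Normal_Form.Determinant"
begin

definition hess_set :: "real \<Rightarrow> nat \<Rightarrow> real set \<Rightarrow> real mat set" where
  "hess_set s n P = {A \<in> carrier_mat n n.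
      \<forall>i<n. \<forall>j<n. (i = j + 1 \<longrightarrow> A $$ (i, j) = s)
                 \<and> (i > j + 1 \<longrightarrow> A $$ (i, j) = 0)
                 \<and> (i \<le> j \<longrightarrow> A $$ (i, j) \<in> P)}"

definition Mmax :: "real \<Rightarrow> real \<Rightarrow> nat \<Rightarrow> real" where
  "Mmax s t n = (if n = 0 then 1
     else (GREATEST m. m \<in> (\<lambda>A. \<bar>det A\<bar>) ` hess_set s n {0..t}))"

end

theory Submission
  imports Defs
begin

text \<open>The determinant is an affine function of each single entry, so on the box of admissible
  entries its absolute value is maximised at a matrix all of whose free entries lie in \<open>{0, t}\<close>.
  Hence \<open>M\<^sub>n\<close> is a maximum over a finite set and is attained. Bordering a maximiser for
  \<open>n - 1\<close> with the last row \<open>(0, \<dots>, 0, s, t)\<close> and a zero last column above the corner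
  gives an admissible \<open>n \<times> n\<close> matrix whose determinant is \<open>t\<close> times larger.\<close>

lemma update_mat_same:
  assumes "i < dim_row A" "j < dim_col A"
  shows "(A |\<^sub>m (i,j) \<mapsto> A $$ (i,j)) = A"
  by (rule eq_matI) (use assms in \<open>auto simp: update_mat_def\<close>)

lemma cofactor_update_mat_same_col:
  "cofactor (A |\<^sub>m (i,j) \<mapsto> x) k j = cofactor A k j"
proof -
  have "mat_delete (A |\<^sub>m (i,j) \<mapsto> x) k j = mat_delete A k j"
    by (rule eq_matI) (auto simp: mat_delete_def update_mat_def)
  then show ?thesis
    unfolding cofactor_def by simp
qed

lemma det_update_mat:
  fixes A :: "'a :: comm_ring_1 mat"
  assumes A: "A \<in> carrier_mat n n" and "i < n" and j: "j < n"
  shows "det (A |\<^sub>m (i,j) \<mapsto> x) = det (A |\<^sub>m (i,j) \<mapsto> 0) + x * cofactor A i j"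
proof -
  have expand: "det (A |\<^sub>m (i,j) \<mapsto> y) = (\<Sum>k<n. (if k = i then y else A $$ (k,j)) * cofactor A k j)"
    for y
  proof -
    have "A |\<^sub>m (i,j) \<mapsto> y \<in> carrier_mat n n"
      using A by (intro carrier_matI) auto
    then have "det (A |\<^sub>m (i,j) \<mapsto> y)
        = (\<Sum>k<n. (A |\<^sub>m (i,j) \<mapsto> y) $$ (k,j) * cofactor (A |\<^sub>m (i,j) \<mapsto> y) k j)"
      by (rule laplace_expansion_column[OF _ j])
    also have "\<dots> = (\<Sum>k<n. (if k = i then y else A $$ (k,j)) * cofactor A k j)"
      using A j by (intro sum.cong) (auto simp: cofactor_update_mat_same_col)
    finally show ?thesis .
  qed
  have "det (A |\<^sub>m (i,j) \<mapsto> x) - det (A |\<^sub>m (i,j) \<mapsto> 0) = (\<Sum>k<n. if k = i then x * cofactor A i j else 0)"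
    unfolding expand sum_subtractf[symmetric] by (rule sum.cong) auto
  also have "\<dots> = x * cofactor A i j"
    using \<open>i < n\<close> by simp
  finally show ?thesis
    by (simp add: algebra_simps)
qed

lemma abs_affine_le_max_endpoints:
  fixes p c a b x :: real
  assumes "a \<le> x" "x \<le> b"
  shows "\<bar>p + x * c\<bar> \<le> max \<bar>p + a * c\<bar> \<bar>p + b * c\<bar>"
proof (cases "c \<ge> 0")
  case True
  then have "a * c \<le> x * c" "x * c \<le> b * c"
    using assms by (simp_all add: mult_right_mono)
  then show ?thesis by linarith
next
  case False
  then have "b * c \<le> x * c" "x * c \<le> a * c"
    using assms by (simp_all add: mult_right_mono_neg)
  then show ?thesis by linarith
qed

definition nonvertex_entries :: "real \<Rightarrow> real \<Rightarrow> real mat \<Rightarrow> (nat \<times> nat) set" where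
  "nonvertex_entries a b A =
     {(i,j). i < dim_row A \<and> j < dim_col A \<and> i \<le> j \<and> A $$ (i,j) \<notin> {a,b}}"

lemma finite_nonvertex_entries: "finite (nonvertex_entries a b A)"
  by (rule finite_subset[of _ "{..<dim_row A} \<times> {..<dim_col A}"]) (auto simp: nonvertex_entries_def)

lemma nonvertex_entries_update_mat:
  assumes "x \<in> {a,b}"
  shows "nonvertex_entries a b (A |\<^sub>m (i,j) \<mapsto> x) = nonvertex_entries a b A - {(i,j)}"
  using assms by (auto simp: nonvertex_entries_def update_mat_def split: if_splits)

lemma hess_set_update_mat:
  assumes "A \<in> hess_set s n P" "i \<le> j" "x \<in> P"
  shows "A |\<^sub>m (i,j) \<mapsto> x \<in> hess_set s n P"
  using assms by (auto simp: hess_set_def update_mat_def)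

lemma hess_set_mono: "P \<subseteq> Q \<Longrightarrow> hess_set s n P \<subseteq> hess_set s n Q"
  unfolding hess_set_def by blast

lemma hess_set_vertex_dominates:
  assumes "a \<le> b" and "A \<in> hess_set s n {a..b}"
  shows "\<exists>B \<in> hess_set s n {a,b}. \<bar>det A\<bar> \<le> \<bar>det B\<bar>"
  using assms(2)
proof (induction "card (nonvertex_entries a b A)" arbitrary: A rule: less_induct)
  case less
  then have A: "A \<in> carrier_mat n n"
    by (simp add: hess_set_def)
  show ?case
  proof (cases "nonvertex_entries a b A = {}")
    case True
    then have "A \<in> hess_set s n {a,b}"
      using less.prems A by (fastforce simp: hess_set_def nonvertex_entries_def)
    then show ?thesis by blast
  next
    case False
    then obtain i j where ij: "(i,j) \<in> nonvertex_entries a b A"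
      by auto
    then have i: "i < n" and j: "j < n" and "i \<le> j"
      using A by (auto simp: nonvertex_entries_def)
    have dominated: "\<exists>B \<in> hess_set s n {a,b}. \<bar>det (A |\<^sub>m (i,j) \<mapsto> x)\<bar> \<le> \<bar>det B\<bar>"
      if "x \<in> {a,b}" for x
    proof (rule less.hyps)
      show "card (nonvertex_entries a b (A |\<^sub>m (i,j) \<mapsto> x)) < card (nonvertex_entries a b A)"
        unfolding nonvertex_entries_update_mat[OF that]
        by (rule card_Diff1_less[OF finite_nonvertex_entries ij])
      show "A |\<^sub>m (i,j) \<mapsto> x \<in> hess_set s n {a..b}"
        using hess_set_update_mat[OF less.prems \<open>i \<le> j\<close>] that \<open>a \<le> b\<close> by auto
    qed
    let ?p = "det (A |\<^sub>m (i,j) \<mapsto> 0)" and ?c = "cofactor A i j"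
    have "A $$ (i,j) \<in> {a..b}"
      using less.prems i j \<open>i \<le> j\<close> by (simp add: hess_set_def)
    have "\<bar>det A\<bar> = \<bar>?p + A $$ (i,j) * ?c\<bar>"
      using det_update_mat[OF A i j, of "A $$ (i,j)"] A i j by (simp add: update_mat_same)
    also have "\<dots> \<le> max \<bar>?p + a * ?c\<bar> \<bar>?p + b * ?c\<bar>"
      using \<open>A $$ (i,j) \<in> {a..b}\<close> by (simp add: abs_affine_le_max_endpoints)
    also have "\<dots> = max \<bar>det (A |\<^sub>m (i,j) \<mapsto> a)\<bar> \<bar>det (A |\<^sub>m (i,j) \<mapsto> b)\<bar>"
      using det_update_mat[OF A i j, of a] det_update_mat[OF A i j, of b] by simp
    finally obtain x where "x \<in> {a,b}" and "\<bar>det A\<bar> \<le> \<bar>det (A |\<^sub>m (i,j) \<mapsto> x)\<bar>"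
      by (auto simp: le_max_iff_disj)
    with dominated show ?thesis
      by (meson order_trans)
  qed
qed

lemma finite_hess_set:
  assumes "finite P"
  shows "finite (hess_set s n P)"
proof -
  let ?I = "{..<n} \<times> {..<n}"
  have "hess_set s n P \<subseteq> (\<lambda>f. mat n n f) ` (?I \<rightarrow>\<^sub>E insert 0 (insert s P))"
  proof
    fix A assume A: "A \<in> hess_set s n P"
    have "A $$ (i,j) \<in> insert 0 (insert s P)" if "i < n" "j < n" for i j
      using A that by (cases "i \<le> j"; cases "i = j + 1") (auto simp: hess_set_def)
    then have "restrict (\<lambda>p. A $$ p) ?I \<in> ?I \<rightarrow>\<^sub>E insert 0 (insert s P)"
      by auto
    moreover have "A = mat n n (restrict (\<lambda>p. A $$ p) ?I)"
      using A by (intro eq_matI) (auto simp: hess_set_def)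
    ultimately show "A \<in> (\<lambda>f. mat n n f) ` (?I \<rightarrow>\<^sub>E insert 0 (insert s P))"
      by blast
  qed
  then show ?thesis
    by (rule finite_subset) (simp add: assms finite_PiE)
qed

lemma hess_set_nonempty:
  assumes "p \<in> P"
  shows "mat n n (\<lambda>(i,j). if i = j + 1 then s else if i \<le> j then p else 0) \<in> hess_set s n P"
  using assms by (auto simp: hess_set_def)

lemma hess_set_0: "hess_set s 0 P = {1\<^sub>m 0}"
  by (auto simp: hess_set_def intro: eq_matI)

lemma abs_det_le_Max_vertices:
  assumes "t \<ge> 0" and "A \<in> hess_set s n {0..t}"
  shows "\<bar>det A\<bar> \<le> Max ((\<lambda>B. \<bar>det B\<bar>) ` hess_set s n {0,t})"
proof -
  obtain B where "B \<in> hess_set s n {0,t}" and "\<bar>det A\<bar> \<le> \<bar>det B\<bar>"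
    using hess_set_vertex_dominates[OF assms] by blast
  then show ?thesis
    using finite_hess_set[of "{0,t}" s n] by (auto intro: Max_ge_iff[THEN iffD2])
qed

lemma Max_vertices_attained:
  assumes "t \<ge> 0"
  obtains A where "A \<in> hess_set s n {0..t}"
    and "\<bar>det A\<bar> = Max ((\<lambda>B. \<bar>det B\<bar>) ` hess_set s n {0,t})"
proof -
  have "Max ((\<lambda>B. \<bar>det B\<bar>) ` hess_set s n {0,t}) \<in> (\<lambda>B. \<bar>det B\<bar>) ` hess_set s n {0,t}"
    using finite_hess_set[of "{0,t}" s n] hess_set_nonempty[of 0 "{0,t}" n s] by (intro Max_in) auto
  moreover have "hess_set s n {0,t} \<subseteq> hess_set s n {0..t}"
    using assms by (intro hess_set_mono) auto
  ultimately show ?thesis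
    using that by auto
qed

lemma Mmax_eq_Max_vertices:
  assumes "t \<ge> 0"
  shows "Mmax s t n = Max ((\<lambda>A. \<bar>det A\<bar>) ` hess_set s n {0,t})"
proof (cases "n = 0")
  case True
  then show ?thesis
    by (simp add: Mmax_def hess_set_0)
next
  case False
  let ?M = "Max ((\<lambda>B. \<bar>det B\<bar>) ` hess_set s n {0,t})"
  have "(GREATEST y. y \<in> (\<lambda>B. \<bar>det B\<bar>) ` hess_set s n {0..t}) = ?M"
  proof (rule Greatest_equality)
    obtain A where "A \<in> hess_set s n {0..t}" and "\<bar>det A\<bar> = ?M"
      using Max_vertices_attained[OF assms] .
    then show "?M \<in> (\<lambda>B. \<bar>det B\<bar>) ` hess_set s n {0..t}"
      by (metis rev_image_eqI)
    show "y \<le> ?M" if "y \<in> (\<lambda>B. \<bar>det B\<bar>) ` hess_set s n {0..t}" for y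
      using that abs_det_le_Max_vertices[OF assms] by auto
  qed
  then show ?thesis
    using False by (simp add: Mmax_def)
qed

definition hess_extend :: "real \<Rightarrow> real \<Rightarrow> real mat \<Rightarrow> real mat" where
  "hess_extend s d A = four_block_mat A (0\<^sub>m (dim_row A) 1)
     (mat 1 (dim_col A) (\<lambda>(_, j). if j + 1 = dim_col A then s else 0)) (mat 1 1 (\<lambda>_. d))"

lemma det_hess_extend:
  assumes "A \<in> carrier_mat m m"
  shows "det (hess_extend s d A) = det A * d"
  using assms unfolding hess_extend_def
  by (subst det_four_block_mat_upper_right_zero_col[OF assms]) (auto simp: det_single)

lemma hess_extend_in_hess_set:
  assumes "A \<in> hess_set s m P" and "0 \<in> P" and "d \<in> P"
  shows "hess_extend s d A \<in> hess_set s (Suc m) P"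
  using assms by (auto simp: hess_set_def hess_extend_def less_Suc_eq)

theorem lemma3p1:
  fixes s t :: real and n :: nat
  assumes "s > 0" and "t \<ge> s" and "n \<ge> 1"
  shows "Mmax s t n \<ge> t * Mmax s t (n - 1)"
proof -
  have "t \<ge> 0"
    using assms(1,2) by linarith
  obtain m where n: "n = Suc m"
    using assms(3) by (cases n) auto
  obtain A where A: "A \<in> hess_set s m {0..t}" and det_A: "\<bar>det A\<bar> = Mmax s t m"
    using Max_vertices_attained[OF \<open>t \<ge> 0\<close>] unfolding Mmax_eq_Max_vertices[OF \<open>t \<ge> 0\<close>] .
  have "A \<in> carrier_mat m m"
    using A by (simp add: hess_set_def)
  then have "t * Mmax s t m = \<bar>det (hess_extend s t A)\<bar>"
    using det_A \<open>t \<ge> 0\<close> by (simp add: det_hess_extend abs_mult)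
  also have "\<dots> \<le> Mmax s t n"
    using hess_extend_in_hess_set[OF A] \<open>t \<ge> 0\<close>
    unfolding n Mmax_eq_Max_vertices[OF \<open>t \<ge> 0\<close>] by (intro abs_det_le_Max_vertices) auto
  finally show ?thesis
    using n by simp
qed

end
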